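(* Let $p\ne17$ be an odd prime. Then $$\Big(\frac2p\Big)\sum_{k=0}^{[p/4]}\binom{4k}{2k}\frac1{272^k}\equiv\begin{cases}1\pmod p&\text{if }p\equiv\pm1,\pm4\pmod{17},\\-1\pmod p&\text{if }p\equiv\pm2,\pm8\pmod{17},\\ \frac14\pmod p&\text{if }p\equiv\pm6,\pm7\pmod{17},\\-\frac14\pmod p&\text{if }p\equiv\pm3,\pm5\pmod{17}.\end{cases}$$
   Context: $[x]$ is the greatest integer $\le x$; $(\frac2p)$ is the Legendre symbol. *)

theory Defs
  imports "HOL-Number_Theory.Number_Theory"
begin

end

theory Submission
  imports Defs "HOL-Computational_Algebra.Polynomial"
begin

text \<open>
  Compute in \<open>\<int>[\<zeta>]/(p)\<close>, \<open>\<zeta>\<close> a primitive 17th root of unity. It contains \<open>s = \<surd>17\<close> (a Gauss sum)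
  and \<open>u, v\<close> with \<open>2u\<^sup>2 = s(s + 1)\<close>, \<open>2v\<^sup>2 = s(s - 1)\<close>, \<open>uv = -2s\<close>. The Frobenius \<open>x \<mapsto> x\<^sup>p\<close> acts as the
  automorphism \<open>\<zeta> \<mapsto> \<zeta>\<^sup>p\<close>, which maps \<open>(u, v)\<close> to \<open>(u, v)\<close>, \<open>(v, -u)\<close>, \<open>(-u, -v)\<close> or \<open>(-v, u)\<close> according to
  the coset of \<open>p\<close> modulo the fourth powers in \<open>(\<int>/17)\<^sup>*\<close>. With \<open>p = 2h + 1\<close>, on the other hand,
  \<open>2\<^sup>h(u\<^sup>pv + v\<^sup>pu) = uv((s(s + 1))\<^sup>h + (s(s - 1))\<^sup>h) = -4s \<Sum>\<^sub>k C(h,2k) 17\<^sup>h\<^sup>-\<^sup>k\<close>, and \<open>s\<^sup>p = 17\<^sup>h s\<close> gives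
  \<open>17\<^sup>h \<equiv> (17/p)\<close>. Comparing the two evaluations and using Euler's criterion \<open>2\<^sup>h \<equiv> (2/p)\<close> and
  \<open>C(4k,2k) \<equiv> 16\<^sup>k C(h,2k) (mod p)\<close> yields the theorem.
\<close>

section \<open>Congruences modulo an ideal \<open>(m, F)\<close> of \<open>\<int>[x]\<close>\<close>

definition poly_cong :: "int \<Rightarrow> int poly \<Rightarrow> int poly \<Rightarrow> int poly \<Rightarrow> bool" where
  "poly_cong m F A B \<longleftrightarrow> (\<exists>Q R. A - B = smult m Q + F * R)"

lemma poly_cong_of_dvd: "F dvd A - B \<Longrightarrow> poly_cong m F A B"
  unfolding poly_cong_def dvd_def by (metis add_0 smult_0_right)

lemma poly_cong_refl [simp]: "poly_cong m F A A"
  by (simp add: poly_cong_of_dvd)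

lemma poly_cong_smult_modulus: "poly_cong m F (A + smult m Q) A"
  unfolding poly_cong_def by (rule exI[of _ Q], rule exI[of _ 0]) simp

lemma poly_cong_add:
  assumes "poly_cong m F A B" "poly_cong m F C D"
  shows "poly_cong m F (A + C) (B + D)"
proof -
  obtain Q R Q' R' where "A - B = smult m Q + F * R" "C - D = smult m Q' + F * R'"
    using assms unfolding poly_cong_def by blast
  then have "A + C - (B + D) = smult m (Q + Q') + F * (R + R')"
    by (simp add: algebra_simps smult_add_right)
  then show ?thesis unfolding poly_cong_def by blast
qed

lemma poly_cong_mult_right:
  assumes "poly_cong m F A B"
  shows "poly_cong m F (A * C) (B * C)"
proof -
  obtain Q R where "A - B = smult m Q + F * R"
    using assms unfolding poly_cong_def by blast
  then have "A * C - B * C = smult m (Q * C) + F * (R * C)"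
    by (simp add: algebra_simps)
  then show ?thesis unfolding poly_cong_def by blast
qed

lemma poly_cong_sym:
  assumes "poly_cong m F A B"
  shows "poly_cong m F B A"
proof -
  obtain Q R where "A - B = smult m Q + F * R"
    using assms unfolding poly_cong_def by blast
  then have "B - A = smult m (- Q) + F * (- R)"
    by (simp add: algebra_simps)
  then show ?thesis unfolding poly_cong_def by blast
qed

lemma poly_cong_trans [trans]:
  assumes "poly_cong m F A B" "poly_cong m F B C"
  shows "poly_cong m F A C"
  using poly_cong_add[OF assms] unfolding poly_cong_def by (simp add: algebra_simps)

lemma poly_cong_mult:
  assumes "poly_cong m F A B" "poly_cong m F C D"
  shows "poly_cong m F (A * C) (B * D)"
proof -
  have "poly_cong m F (A * C) (B * C)" using assms(1) by (rule poly_cong_mult_right)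
  also have "poly_cong m F (B * C) (B * D)"
    using poly_cong_mult_right[OF assms(2), of B] by (simp add: mult.commute)
  finally show ?thesis .
qed

lemma poly_cong_power: "poly_cong m F A B \<Longrightarrow> poly_cong m F (A ^ n) (B ^ n)"
  by (induction n) (simp_all add: poly_cong_mult)

lemma poly_cong_smult: "poly_cong m F A B \<Longrightarrow> poly_cong m F (smult c A) (smult c B)"
  using poly_cong_mult[of m F "[:c:]" "[:c:]" A B] by simp

lemma poly_cong_sum:
  "(\<And>i. i \<in> I \<Longrightarrow> poly_cong m F (f i) (g i)) \<Longrightarrow> poly_cong m F (sum f I) (sum g I)"
  by (induction I rule: infinite_finite_induct) (simp_all add: poly_cong_add)

lemma poly_cong_monom_coeff:
  assumes "[a = b] (mod m)"
  shows "poly_cong m F (monom a k) (monom b k)"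
proof -
  obtain t where "a - b = m * t" using assms by (metis cong_iff_dvd_diff dvd_def)
  then have "monom a k - monom b k = smult m (monom t k) + F * 0"
    by (simp add: smult_monom diff_monom)
  then show ?thesis unfolding poly_cong_def by blast
qed

lemma poly_cong_monom_mod:
  assumes "F dvd monom 1 N - 1"
  shows "poly_cong m F (monom c k) (monom c (k mod N))"
proof -
  have "monom c k = monom c (k mod N) * monom 1 N ^ (k div N)"
    by (simp add: monom_power mult_monom)
  also have "poly_cong m F \<dots> (monom c (k mod N) * 1 ^ (k div N))"
    using assms by (intro poly_cong_mult poly_cong_power poly_cong_refl poly_cong_of_dvd)
  finally show ?thesis by simp
qed

lemma monic_dvd_of_pseudo_mod_eq_0:
  assumes "lead_coeff F = 1" "pseudo_mod A F = 0"
  shows "F dvd A"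
proof -
  obtain q r where qr: "pseudo_divmod A F = (q, r)" by fastforce
  then have "r = 0" using assms(2) by (simp add: pseudo_mod_def)
  moreover have "F \<noteq> 0" using assms(1) by auto
  ultimately show ?thesis
    using pseudo_divmod(1)[OF _ qr] assms(1) by simp
qed

lemma poly_cong_const_imp_cong:
  assumes F: "lead_coeff F = 1" "degree F > 0" and cong: "poly_cong m F [:a:] [:b:]"
  shows "[a = b] (mod m)"
proof -
  obtain Q R where QR: "[:a - b:] = smult m Q + F * R"
    using cong unfolding poly_cong_def by auto
  have "F \<noteq> 0" using F by auto
  obtain q r where "pseudo_divmod Q F = (q, r)" by fastforce
  from pseudo_divmod[OF \<open>F \<noteq> 0\<close> this] F
  have Q: "Q = F * q + r" and r: "r = 0 \<or> degree r < degree F" by simp_all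
  have "[:a - b:] - smult m r = F * (R + smult m q)"
    using QR Q by (simp add: algebra_simps smult_add_right)
  moreover have "degree ([:a - b:] - smult m r) < degree F"
    using r F(2) degree_smult_le[of m r] by (auto intro: le_less_trans[OF degree_diff_le_max])
  ultimately have "R + smult m q = 0"
    using \<open>F \<noteq> 0\<close> by (metis degree_mult_eq leD le_add1)
  with \<open>[:a - b:] - smult m r = F * (R + smult m q)\<close> have "[:a - b:] = smult m r" by simp
  then have "a - b = m * coeff r 0" by (metis coeff_pCons_0 coeff_smult)
  then show ?thesis by (simp add: cong_iff_dvd_diff)
qed

section \<open>The Frobenius congruence\<close>

lemma add_power_prime_eq:
  fixes a b :: "'a::comm_ring_1"
  assumes "prime p"
  shows "\<exists>C. (a + b) ^ p = a ^ p + b ^ p + of_nat p * C"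
proof -
  have "p > 0" using assms by (simp add: prime_gt_0_nat)
  define g where "g k = of_nat ((p choose k) div p) * a ^ k * b ^ (p - k)" for k
  have middle: "of_nat (p choose k) * a ^ k * b ^ (p - k) = of_nat p * g k" if "k \<in> {1..<p}" for k
  proof -
    have "p dvd p choose k" using that assms by (intro dvd_choose_prime) auto
    then show ?thesis unfolding g_def by (metis dvd_mult_div_cancel of_nat_mult mult.assoc)
  qed
  have "{..p} = insert 0 (insert p {1..<p})" using \<open>p > 0\<close> by auto
  then have "(a + b) ^ p = b ^ p + a ^ p + (\<Sum>k\<in>{1..<p}. of_nat (p choose k) * a ^ k * b ^ (p - k))"
    using \<open>p > 0\<close> by (simp add: binomial_ring)
  also have "\<dots> = a ^ p + b ^ p + of_nat p * (\<Sum>k\<in>{1..<p}. g k)"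
    by (simp add: middle sum_distrib_left)
  finally show ?thesis by blast
qed

lemma sum_power_prime_eq:
  fixes f :: "'b \<Rightarrow> 'a::comm_ring_1"
  assumes "prime p"
  shows "\<exists>C. sum f I ^ p = (\<Sum>i\<in>I. f i ^ p) + of_nat p * C"
proof (induction I rule: infinite_finite_induct)
  case (insert i I)
  obtain C where C: "sum f I ^ p = (\<Sum>i\<in>I. f i ^ p) + of_nat p * C"
    using insert.IH by blast
  obtain C' where "(f i + sum f I) ^ p = f i ^ p + sum f I ^ p + of_nat p * C'"
    using add_power_prime_eq[OF assms] by blast
  then have "sum f (insert i I) ^ p = (\<Sum>i\<in>insert i I. f i ^ p) + of_nat p * (C + C')"
    using insert C by (simp add: algebra_simps)
  then show ?case by blast
qed (use assms in \<open>auto intro!: exI[of _ 0] simp: prime_gt_0_nat zero_power\<close>)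

lemma power_prime_cong_self:
  fixes c :: int
  assumes "prime p"
  shows "[c ^ p = c] (mod int p)"
proof -
  have nonneg: "[int n ^ p = int n] (mod int p)" for n
  proof (induction n)
    case 0
    then show ?case using assms by (simp add: prime_gt_0_nat zero_power)
  next
    case (Suc n)
    obtain C where "(int n + 1) ^ p = int n ^ p + 1 ^ p + int p * C"
      using add_power_prime_eq[OF assms] by blast
    then have "[int (Suc n) ^ p = int n ^ p + 1] (mod int p)"
      by (simp add: cong_iff_dvd_diff add.commute)
    also have "[int n ^ p + 1 = int n + 1] (mod int p)"
      using Suc.IH by (rule cong_add) simp
    finally show ?case by (simp add: add.commute)
  qed
  have "[c ^ p = (c mod int p) ^ p] (mod int p)"
    by (intro cong_pow) (simp add: cong_def)
  also have "[(c mod int p) ^ p = c mod int p] (mod int p)"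
    using nonneg[of "nat (c mod int p)"] assms by (simp add: prime_gt_0_nat)
  also have "[c mod int p = c] (mod int p)"
    by (simp add: cong_def)
  finally show ?thesis .
qed

definition cyclo_aut :: "nat \<Rightarrow> nat \<Rightarrow> int poly \<Rightarrow> int poly" where
  "cyclo_aut N r A = (\<Sum>j\<le>degree A. monom (coeff A j) (j * r mod N))"

lemma power_prime_poly_cong:
  assumes "prime p"
  shows "poly_cong (int p) F (A ^ p) (\<Sum>j\<le>degree A. monom (coeff A j) (j * p))"
proof -
  obtain C where C: "(\<Sum>j\<le>degree A. monom (coeff A j) j) ^ p
      = (\<Sum>j\<le>degree A. monom (coeff A j) j ^ p) + of_nat p * C"
    using sum_power_prime_eq[OF assms] by blast
  have "A ^ p = (\<Sum>j\<le>degree A. monom (coeff A j ^ p) (j * p)) + smult (int p) C"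
    using C by (simp add: poly_as_sum_of_monoms monom_power of_nat_poly)
  also have "poly_cong (int p) F \<dots> (\<Sum>j\<le>degree A. monom (coeff A j ^ p) (j * p))"
    by (rule poly_cong_smult_modulus)
  also have "poly_cong (int p) F \<dots> (\<Sum>j\<le>degree A. monom (coeff A j) (j * p))"
    using assms by (intro poly_cong_sum poly_cong_monom_coeff power_prime_cong_self)
  finally show ?thesis .
qed

lemma frobenius_cong:
  assumes "prime p" and F: "F dvd monom 1 N - 1"
  shows "poly_cong (int p) F (A ^ p) (cyclo_aut N (p mod N) A)"
proof -
  have "poly_cong (int p) F (A ^ p) (\<Sum>j\<le>degree A. monom (coeff A j) (j * p))"
    using assms(1) by (rule power_prime_poly_cong)
  also have "poly_cong (int p) F \<dots> (\<Sum>j\<le>degree A. monom (coeff A j) (j * p mod N))"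
    using F by (intro poly_cong_sum poly_cong_monom_mod)
  also have "(\<Sum>j\<le>degree A. monom (coeff A j) (j * p mod N)) = cyclo_aut N (p mod N) A"
    by (simp add: cyclo_aut_def mod_mult_right_eq)
  finally show ?thesis .
qed

section \<open>Arithmetic in \<open>\<int>[\<zeta>\<^sub>1\<^sub>7]\<close>\<close>

text \<open>
  \<open>\<int>[\<zeta>\<^sub>1\<^sub>7] = \<int>[x]/(Phi17)\<close>. With the quartic Gauss periods \<open>\<eta>\<^sub>i = \<Sum>\<^bsub>k \<equiv> i (mod 4)\<^esub> \<zeta>^(3^k)\<close>
  (3 generates \<open>(\<int>/17)\<^sup>*\<close>), \<open>rt17 = \<eta>\<^sub>0 - \<eta>\<^sub>1 + \<eta>\<^sub>2 - \<eta>\<^sub>3\<close> is the quadratic Gauss sum,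
  \<open>rt_plus = \<eta>\<^sub>3 - \<eta>\<^sub>1\<close> and \<open>rt_minus = \<eta>\<^sub>0 - \<eta>\<^sub>2\<close>.
\<close>

definition Phi17 :: "int poly" where
  "Phi17 = [:1, 1, 1, 1, 1, 1, 1, 1, 1, 1, 1, 1, 1, 1, 1, 1, 1:]"

definition rt17 :: "int poly" where
  "rt17 = [:0, 1, 1, -1, 1, -1, -1, -1, 1, 1, -1, -1, -1, 1, -1, 1, 1:]"

definition rt_plus :: "int poly" where
  "rt_plus = [:0, 0, 0, -1, 0, -1, 1, 1, 0, 0, 1, 1, -1, 0, -1, 0, 0:]"

definition rt_minus :: "int poly" where
  "rt_minus = [:0, 1, -1, 0, 1, 0, 0, 0, -1, -1, 0, 0, 0, 1, 0, -1, 1:]"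

lemma Phi17_dvd_monom_17: "Phi17 dvd monom 1 17 - 1"
proof
  show "monom 1 17 - 1 = Phi17 * [:-1, 1:]" unfolding Phi17_def by code_simp
qed

lemma lead_coeff_Phi17: "lead_coeff Phi17 = 1"
  unfolding Phi17_def by code_simp

lemma degree_Phi17: "degree Phi17 = 16"
  unfolding Phi17_def by code_simp

lemma poly_cong_Phi17_of_pseudo_mod: "pseudo_mod (A - B) Phi17 = 0 \<Longrightarrow> poly_cong m Phi17 A B"
  by (intro poly_cong_of_dvd monic_dvd_of_pseudo_mod_eq_0 lead_coeff_Phi17)

lemma rt17_square: "poly_cong m Phi17 (rt17 * rt17) 17"
  by (rule poly_cong_Phi17_of_pseudo_mod) (unfold rt17_def Phi17_def, code_simp)

lemma rt_plus_square: "poly_cong m Phi17 (smult 2 (rt_plus * rt_plus)) (rt17 * (rt17 + 1))"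
  by (rule poly_cong_Phi17_of_pseudo_mod) (unfold rt17_def rt_plus_def Phi17_def, code_simp)

lemma rt_minus_square: "poly_cong m Phi17 (smult 2 (rt_minus * rt_minus)) (rt17 * (rt17 - 1))"
  by (rule poly_cong_Phi17_of_pseudo_mod) (unfold rt17_def rt_minus_def Phi17_def, code_simp)

lemma rt_plus_rt_minus: "poly_cong m Phi17 (rt_plus * rt_minus) (- 2 * rt17)"
  by (rule poly_cong_Phi17_of_pseudo_mod) (unfold rt17_def rt_plus_def rt_minus_def Phi17_def, code_simp)

text \<open>
  \<open>\<zeta> \<mapsto> \<zeta>\<^sup>3\<close> shifts \<open>\<eta>\<^sub>i \<mapsto> \<eta>\<^sub>i\<^sub>+\<^sub>1\<close>; the residues below are the cosets \<open>3\<^sup>jH\<close> of the fourth powers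
  \<open>H = {1, 4, 13, 16}\<close>, on which the automorphism acts as \<open>j\<close> quarter turns of \<open>(rt_plus, rt_minus)\<close>.
\<close>

lemma cyclo_aut_coset_1:
  assumes "r \<in> {1, 4, 13, 16}"
  shows "cyclo_aut 17 r rt17 = smult 1 rt17 \<and> cyclo_aut 17 r rt_plus = rt_plus \<and> cyclo_aut 17 r rt_minus = rt_minus"
  using assms unfolding rt17_def rt_plus_def rt_minus_def cyclo_aut_def
  by (elim insertE emptyE; hypsubst; code_simp)

lemma cyclo_aut_coset_3:
  assumes "r \<in> {3, 5, 12, 14}"
  shows "cyclo_aut 17 r rt17 = smult (-1) rt17 \<and> cyclo_aut 17 r rt_plus = rt_minus \<and> cyclo_aut 17 r rt_minus = - rt_plus"
  using assms unfolding rt17_def rt_plus_def rt_minus_def cyclo_aut_def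
  by (elim insertE emptyE; hypsubst; code_simp)

lemma cyclo_aut_coset_9:
  assumes "r \<in> {2, 8, 9, 15}"
  shows "cyclo_aut 17 r rt17 = smult 1 rt17 \<and> cyclo_aut 17 r rt_plus = - rt_plus \<and> cyclo_aut 17 r rt_minus = - rt_minus"
  using assms unfolding rt17_def rt_plus_def rt_minus_def cyclo_aut_def
  by (elim insertE emptyE; hypsubst; code_simp)

lemma cyclo_aut_coset_10:
  assumes "r \<in> {6, 7, 10, 11}"
  shows "cyclo_aut 17 r rt17 = smult (-1) rt17 \<and> cyclo_aut 17 r rt_plus = - rt_minus \<and> cyclo_aut 17 r rt_minus = rt_plus"
  using assms unfolding rt17_def rt_plus_def rt_minus_def cyclo_aut_def
  by (elim insertE emptyE; hypsubst; code_simp)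

text \<open>The cross terms \<open>2(\<sigma>(rt_plus) rt_minus + \<sigma>(rt_minus) rt_plus)\<close> for the four cosets.\<close>

lemma rt_cross_terms:
  "poly_cong m Phi17 (smult 2 (rt_plus * rt_minus + rt_minus * rt_plus)) (smult (- 8) rt17)"
  "poly_cong m Phi17 (smult 2 (rt_minus * rt_minus + - rt_plus * rt_plus)) (smult (- 2) rt17)"
  "poly_cong m Phi17 (smult 2 (- rt_plus * rt_minus + - rt_minus * rt_plus)) (smult 8 rt17)"
  "poly_cong m Phi17 (smult 2 (- rt_minus * rt_minus + rt_plus * rt_plus)) (smult 2 rt17)"
  by (rule poly_cong_Phi17_of_pseudo_mod;
      unfold rt17_def rt_plus_def rt_minus_def Phi17_def; code_simp)+

lemma coprime_17: "prime p \<Longrightarrow> p \<noteq> 17 \<Longrightarrow> coprime 17 (int p)"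
proof -
  assume "prime p" "p \<noteq> 17"
  moreover have "prime (17::nat)" by code_simp
  ultimately have "coprime 17 p" using primes_coprime by blast
  then show ?thesis by (metis coprime_int_iff of_nat_numeral)
qed

lemma rt17_power_even: "poly_cong m Phi17 (rt17 ^ (2 * k)) (17 ^ k)"
  using poly_cong_power[OF rt17_square, of m k] by (simp add: power_mult power2_eq_square)

lemma rt17_smult_cancel:
  assumes "prime p" "p \<noteq> 17" and "poly_cong (int p) Phi17 (smult a rt17) (smult b rt17)"
  shows "[a = b] (mod int p)"
proof -
  have "poly_cong (int p) Phi17 [:a * 17:] (smult a (rt17 * rt17))"
    using poly_cong_smult[OF poly_cong_sym[OF rt17_square]] by (simp add: numeral_poly)
  also have "poly_cong (int p) Phi17 (smult a (rt17 * rt17)) (smult b (rt17 * rt17))"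
    using poly_cong_mult_right[OF assms(3), of rt17] by simp
  also have "poly_cong (int p) Phi17 (smult b (rt17 * rt17)) [:b * 17:]"
    using poly_cong_smult[OF rt17_square] by (simp add: numeral_poly)
  finally have "[a * 17 = b * 17] (mod int p)"
    using lead_coeff_Phi17 degree_Phi17 by (intro poly_cong_const_imp_cong) simp_all
  moreover have "coprime 17 (int p)"
    using coprime_17 assms(1,2) by blast
  ultimately show ?thesis by (simp add: cong_mult_rcancel)
qed

lemma sum_even_indices:
  fixes g :: "nat \<Rightarrow> 'a::comm_ring_1"
  shows "(\<Sum>m\<le>N. (1 + (-1) ^ m) * g m) = 2 * (\<Sum>k\<le>N div 2. g (2 * k))"
proof (induction N)
  case (Suc N)
  show ?case
  proof (cases "even N")
    case True
    then have "Suc N div 2 = N div 2" by presburger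
    then show ?thesis using Suc.IH True by simp
  next
    case False
    then have "Suc N div 2 = Suc (N div 2)" "2 * Suc (N div 2) = Suc N" by presburger+
    then show ?thesis using Suc.IH False by (simp add: algebra_simps)
  qed
qed simp

lemma binomial_add_one_add_minus_one:
  fixes s :: "'a::comm_ring_1"
  shows "(s + 1) ^ h + (s - 1) ^ h = 2 * (\<Sum>k\<le>h div 2. of_nat (h choose (2 * k)) * s ^ (h - 2 * k))"
proof -
  have "(s + 1) ^ h = (\<Sum>m\<le>h. of_nat (h choose m) * s ^ (h - m))"
    using binomial_ring[of 1 s h] by (simp add: add.commute)
  moreover have "(s - 1) ^ h = (\<Sum>m\<le>h. (-1) ^ m * (of_nat (h choose m) * s ^ (h - m)))"
    using binomial_ring[of "-1" s h] by (simp add: mult_ac)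
  ultimately have "(s + 1) ^ h + (s - 1) ^ h
      = (\<Sum>m\<le>h. (1 + (-1) ^ m) * (of_nat (h choose m) * s ^ (h - m)))"
    by (simp add: sum.distrib[symmetric] algebra_simps)
  then show ?thesis by (simp add: sum_even_indices)
qed

definition even_binomial_sum :: "nat \<Rightarrow> int" where
  "even_binomial_sum h = (\<Sum>k\<le>h div 2. int (h choose (2 * k)) * 17 ^ (h - k))"

lemma cross_term_cong:
  "poly_cong m Phi17 (smult (2 ^ h) (rt_plus ^ (2 * h + 1) * rt_minus + rt_minus ^ (2 * h + 1) * rt_plus))
     (smult (- 4 * even_binomial_sum h) rt17)"
proof -
  have odd_power: "x ^ (2 * h + 1) = x * (x * x) ^ h" for x :: "int poly"
    by (simp add: power_mult power2_eq_square)
  have "smult (2 ^ h) (rt_plus ^ (2 * h + 1) * rt_minus + rt_minus ^ (2 * h + 1) * rt_plus)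
      = rt_plus * rt_minus * (smult 2 (rt_plus * rt_plus) ^ h + smult 2 (rt_minus * rt_minus) ^ h)"
    unfolding odd_power smult_power by (simp add: algebra_simps smult_add_right)
  also have "poly_cong m Phi17 \<dots> (- 2 * rt17 * ((rt17 * (rt17 + 1)) ^ h + (rt17 * (rt17 - 1)) ^ h))"
    by (intro poly_cong_mult poly_cong_add poly_cong_power
        rt_plus_rt_minus rt_plus_square rt_minus_square)
  also have "\<dots> = - 2 * rt17 ^ (h + 1) * ((rt17 + 1) ^ h + (rt17 - 1) ^ h)"
    unfolding power_mult_distrib by (simp add: algebra_simps)
  also have "\<dots> = - 4 * (\<Sum>k\<le>h div 2. of_nat (h choose (2 * k)) * (rt17 ^ (h + 1) * rt17 ^ (h - 2 * k)))"
    unfolding binomial_add_one_add_minus_one by (simp add: sum_distrib_left mult_ac)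
  also have "poly_cong m Phi17 \<dots> (- 4 * (\<Sum>k\<le>h div 2. of_nat (h choose (2 * k)) * (17 ^ (h - k) * rt17)))"
  proof (rule poly_cong_mult[OF poly_cong_refl], rule poly_cong_sum, rule poly_cong_mult[OF poly_cong_refl])
    fix k assume "k \<in> {..h div 2}"
    then have "h + 1 + (h - 2 * k) = Suc (2 * (h - k))" by auto
    then have "rt17 ^ (h + 1) * rt17 ^ (h - 2 * k) = rt17 ^ (2 * (h - k)) * rt17"
      by (metis power_add power_Suc2)
    then show "poly_cong m Phi17 (rt17 ^ (h + 1) * rt17 ^ (h - 2 * k)) (17 ^ (h - k) * rt17)"
      using rt17_power_even poly_cong_mult_right by metis
  qed
  also have "\<dots> = smult (- 4 * even_binomial_sum h) rt17"
    by (simp add: even_binomial_sum_def of_nat_poly numeral_poly poly_const_pow mult_ac flip: smult_sum)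
  finally show ?thesis .
qed

lemma frobenius_rt17_cong:
  assumes "prime p" "odd p" "p \<noteq> 17"
    and frob: "poly_cong (int p) Phi17 (rt17 ^ p) (smult e rt17)"
  shows "[17 ^ ((p - 1) div 2) = e] (mod int p)"
proof -
  define h where "h = (p - 1) div 2"
  have "p = Suc (2 * h)" using assms(2) unfolding h_def by presburger
  then have "smult (17 ^ h) rt17 = 17 ^ h * rt17" "rt17 ^ p = rt17 ^ (2 * h) * rt17"
    by (simp_all add: numeral_poly poly_const_pow)
  then have "poly_cong (int p) Phi17 (smult (17 ^ h) rt17) (rt17 ^ p)"
    by (metis poly_cong_sym poly_cong_mult_right rt17_power_even)
  also note frob
  finally show ?thesis
    unfolding h_def by (rule rt17_smult_cancel[OF assms(1,3)])
qed

lemma frobenius_cross_term_cong: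
  assumes "prime p" "odd p" "p \<noteq> 17"
    and frob: "poly_cong (int p) Phi17 (smult 2 (rt_plus ^ p * rt_minus + rt_minus ^ p * rt_plus)) (smult k rt17)"
  shows "[2 ^ ((p - 1) div 2) * k = - 8 * even_binomial_sum ((p - 1) div 2)] (mod int p)"
proof -
  define h where "h = (p - 1) div 2"
  have p: "2 * h + 1 = p" using assms(2) unfolding h_def by presburger
  have "smult (2 ^ h * k) rt17 = smult (2 ^ h) (smult k rt17)" by simp
  also have "poly_cong (int p) Phi17 \<dots> (smult (2 ^ h) (smult 2 (rt_plus ^ p * rt_minus + rt_minus ^ p * rt_plus)))"
    using poly_cong_smult[OF poly_cong_sym[OF frob]] .
  also have "\<dots> = smult 2 (smult (2 ^ h) (rt_plus ^ (2 * h + 1) * rt_minus + rt_minus ^ (2 * h + 1) * rt_plus))"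
    unfolding p by (simp add: ac_simps)
  also have "poly_cong (int p) Phi17 \<dots> (smult 2 (smult (- 4 * even_binomial_sum h) rt17))"
    by (intro poly_cong_smult cross_term_cong)
  also have "\<dots> = smult (- 8 * even_binomial_sum h) rt17" by simp
  finally show ?thesis
    unfolding h_def by (rule rt17_smult_cancel[OF assms(1,3)])
qed

section \<open>Binomial sums modulo \<open>p\<close>\<close>

lemma Suc_times_central_binomial:
  "Suc m * ((2 * Suc m) choose Suc m) = 2 * (2 * m + 1) * ((2 * m) choose m)"
proof -
  have "Suc m * ((2 * m + 2) choose Suc m) = (2 * m + 2) * ((2 * m + 1) choose m)"
    using binomial_absorption[of m "2 * m + 2"] by simp
  also have "(2 * m + 1) choose m = (2 * m + 1) choose Suc m"
    using binomial_symmetric[of "Suc m" "2 * m + 1"] by simp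
  finally have "Suc m * ((2 * m + 2) choose Suc m) = 2 * (Suc m * ((2 * m + 1) choose Suc m))"
    by simp
  also have "Suc m * ((2 * m + 1) choose Suc m) = (2 * m + 1) * ((2 * m) choose m)"
    using Suc_times_binomial_eq[of "2 * m" m] by simp
  finally show ?thesis by simp
qed

lemma Suc_times_binomial_Suc: "Suc m * (h choose Suc m) = (h - m) * (h choose m)"
  by (metis binomial_absorb_comp binomial_absorption)

lemma coprime_less_prime:
  assumes "prime p" "0 < k" "k < p"
  shows "coprime (int k) (int p)"
proof -
  have "\<not> p dvd k" using assms(2,3) by (auto dest: dvd_imp_le)
  with assms(1) have "coprime p k" by (rule prime_imp_coprime)
  then show ?thesis by (simp add: coprime_commute)
qed

lemma central_binomial_cong:
  assumes "prime p" "odd p" "m \<le> (p - 1) div 2"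
  shows "[int ((2 * m) choose m) = (-4) ^ m * int (((p - 1) div 2) choose m)] (mod int p)"
  using assms(3)
proof (induction m)
  case (Suc m)
  define h where "h = (p - 1) div 2"
  have p: "int p = 2 * int h + 1" using assms(2) unfolding h_def by presburger
  have "m < h" using Suc.prems unfolding h_def by simp
  have "int (Suc m) * int ((2 * Suc m) choose Suc m) = 2 * (2 * int m + 1) * int ((2 * m) choose m)"
    using arg_cong[OF Suc_times_central_binomial[of m], of int]
    by (simp only: of_nat_mult of_nat_add of_nat_1 of_nat_numeral)
  also have "[\<dots> = 2 * (2 * int m + 1) * ((-4) ^ m * int (h choose m))] (mod int p)"
    using Suc unfolding h_def by (intro cong_mult cong_refl) simp
  also have "[2 * (2 * int m + 1) * ((-4) ^ m * int (h choose m))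
      = - 4 * (int h - int m) * ((-4) ^ m * int (h choose m))] (mod int p)"
  proof -
    have "2 * (2 * int m + 1) - (- 4 * (int h - int m)) = 2 * int p" unfolding p by simp
    then have "[2 * (2 * int m + 1) = - 4 * (int h - int m)] (mod int p)"
      by (simp add: cong_iff_dvd_diff)
    then show ?thesis by (rule cong_mult[OF _ cong_refl])
  qed
  also have "- 4 * (int h - int m) * ((-4) ^ m * int (h choose m))
      = int (Suc m) * ((-4) ^ Suc m * int (h choose Suc m))"
  proof -
    have "int (Suc m) * int (h choose Suc m) = (int h - int m) * int (h choose m)"
      using arg_cong[OF Suc_times_binomial_Suc[of m h], of int] \<open>m < h\<close>
      by (simp add: of_nat_diff algebra_simps)
    then have "- 4 * (-4) ^ m * ((int h - int m) * int (h choose m))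
        = - 4 * (-4) ^ m * (int (Suc m) * int (h choose Suc m))"
      by simp
    then show ?thesis by (simp only: power_Suc ac_simps)
  qed
  finally have "[int (Suc m) * int ((2 * Suc m) choose Suc m)
      = int (Suc m) * ((-4) ^ Suc m * int (h choose Suc m))] (mod int p)" .
  moreover have "coprime (int (Suc m)) (int p)"
    using assms(1) \<open>m < h\<close> unfolding h_def by (intro coprime_less_prime) auto
  ultimately show ?case unfolding h_def by (metis cong_mult_lcancel)
qed simp

lemma binomial_272_sum_cong:
  assumes "prime p" "odd p"
  defines "h \<equiv> (p - 1) div 2" and "n \<equiv> p div 4"
  shows "[(\<Sum>k=0..n. int ((4 * k) choose (2 * k)) * 272 ^ (n - k)) * 17 ^ (h - n)
          = 16 ^ n * even_binomial_sum h] (mod int p)"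
proof -
  have n: "n = h div 2" unfolding n_def h_def using assms(2) by presburger
  have "[int ((4 * k) choose (2 * k)) * 272 ^ (n - k) * 17 ^ (h - n)
      = 16 ^ n * (int (h choose (2 * k)) * 17 ^ (h - k))] (mod int p)" if "k \<le> n" for k
  proof -
    have "[int ((2 * (2 * k)) choose (2 * k)) = (-4) ^ (2 * k) * int (h choose (2 * k))] (mod int p)"
      using central_binomial_cong[OF assms(1,2), of "2 * k"] \<open>k \<le> n\<close> unfolding n h_def by simp
    then have "[int ((4 * k) choose (2 * k)) = 16 ^ k * int (h choose (2 * k))] (mod int p)"
      by (simp add: power_mult)
    then have "[int ((4 * k) choose (2 * k)) * (272 ^ (n - k) * 17 ^ (h - n))
        = 16 ^ k * int (h choose (2 * k)) * (272 ^ (n - k) * 17 ^ (h - n))] (mod int p)"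
      by (rule cong_mult[OF _ cong_refl])
    moreover have "(16::int) ^ k * 272 ^ (n - k) * 17 ^ (h - n) = 16 ^ n * 17 ^ (h - k)"
    proof -
      have exps: "k + (n - k) = n" "n - k + (h - n) = h - k" using \<open>k \<le> n\<close> n by auto
      have "(272::int) ^ (n - k) = 16 ^ (n - k) * 17 ^ (n - k)"
        by (simp flip: power_mult_distrib)
      then have "(16::int) ^ k * 272 ^ (n - k) * 17 ^ (h - n)
          = 16 ^ k * 16 ^ (n - k) * (17 ^ (n - k) * 17 ^ (h - n))"
        by (simp only: mult.assoc)
      also have "\<dots> = 16 ^ n * 17 ^ (h - k)"
        by (simp only: exps flip: power_add)
      finally show ?thesis .
    qed
    ultimately show ?thesis by (simp add: ac_simps)
  qed
  then have "[(\<Sum>k=0..n. int ((4 * k) choose (2 * k)) * 272 ^ (n - k) * 17 ^ (h - n))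
      = (\<Sum>k=0..n. 16 ^ n * (int (h choose (2 * k)) * 17 ^ (h - k)))] (mod int p)"
    by (intro cong_sum) simp
  then show ?thesis
    by (simp add: even_binomial_sum_def n atLeast0AtMost sum_distrib_left sum_distrib_right)
qed

lemma Legendre_mult_self: "\<not> [a = 0] (mod p) \<Longrightarrow> Legendre a p * Legendre a p = 1"
  by (simp add: Legendre_def)

lemma legendre_binomial_sum_cong:
  assumes "prime p" "odd p" "p \<noteq> 17"
    and e: "[17 ^ ((p - 1) div 2) = e] (mod int p)"
    and d: "[2 ^ ((p - 1) div 2) * d = - 8 * even_binomial_sum ((p - 1) div 2)] (mod int p)"
    and "d = - 2 * c * e"
  shows "[4 * Legendre 2 (int p) * (\<Sum>k=0..p div 4. int ((4 * k) choose (2 * k)) * 272 ^ (p div 4 - k))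
          = c * 272 ^ (p div 4)] (mod int p)"
proof -
  define h where "h = (p - 1) div 2"
  define n where "n = p div 4"
  define L where "L = Legendre 2 (int p)"
  define T where "T = (\<Sum>k=0..n. int ((4 * k) choose (2 * k)) * 272 ^ (n - k))"
  define V where "V = even_binomial_sum h"
  have "n \<le> h" unfolding n_def h_def by simp
  have "p > 2" using assms(1,2) prime_ge_2_nat[OF assms(1)] by (cases "p = 2") auto
  have L: "[L = 2 ^ h] (mod int p)"
    unfolding L_def h_def using euler_criterion[OF assms(1) \<open>p > 2\<close>] by simp
  have "L * L = 1"
    using \<open>p > 2\<close> unfolding L_def by (intro Legendre_mult_self) (auto simp: cong_0_iff dest: zdvd_imp_le)
  have "4 * L * T * (8 * 17 ^ (h - n)) = 32 * L * (T * 17 ^ (h - n))"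
    by simp
  also have "[32 * L * (T * 17 ^ (h - n)) = 32 * L * (16 ^ n * V)] (mod int p)"
    using binomial_272_sum_cong[OF assms(1,2)] unfolding T_def V_def h_def n_def
    by (rule cong_mult[OF cong_refl])
  also have "32 * L * (16 ^ n * V) = - 4 * 16 ^ n * L * (- 8 * V)"
    by simp
  also have "[- 4 * 16 ^ n * L * (- 8 * V) = - 4 * 16 ^ n * L * (2 ^ h * d)] (mod int p)"
    using cong_sym[OF d] unfolding V_def h_def by (rule cong_mult[OF cong_refl])
  also have "[- 4 * 16 ^ n * L * (2 ^ h * d) = - 4 * 16 ^ n * L * (L * d)] (mod int p)"
    using cong_sym[OF L] by (intro cong_mult[OF cong_refl] cong_mult[OF _ cong_refl])
  also have "- 4 * 16 ^ n * L * (L * d) = 8 * 16 ^ n * c * e"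
    using \<open>L * L = 1\<close> \<open>d = - 2 * c * e\<close> by (simp add: algebra_simps)
  also have "[8 * 16 ^ n * c * e = 8 * 16 ^ n * c * 17 ^ h] (mod int p)"
    using cong_sym[OF e] unfolding h_def by (rule cong_mult[OF cong_refl])
  also have "8 * 16 ^ n * c * 17 ^ h = c * 272 ^ n * (8 * 17 ^ (h - n))"
  proof -
    have "(17::int) ^ h = 17 ^ n * 17 ^ (h - n)" using \<open>n \<le> h\<close> by (simp flip: power_add)
    then show ?thesis by (simp add: power_mult_distrib[symmetric] ac_simps)
  qed
  finally have "[4 * L * T * (8 * 17 ^ (h - n)) = c * 272 ^ n * (8 * 17 ^ (h - n))] (mod int p)" .
  moreover have "coprime (8 * 17 ^ (h - n)) (int p)"
    using coprime_17[OF assms(1,3)] assms(2) coprime_power_left_iff[of 2 3 "int p"] by simp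
  ultimately have "[4 * L * T = c * 272 ^ n] (mod int p)"
    using cong_mult_rcancel by blast
  then show ?thesis unfolding L_def T_def n_def .
qed

lemma binomial_sum_cong_of_frobenius:
  assumes "prime p" "odd p" "p \<noteq> 17"
    and e: "cyclo_aut 17 (p mod 17) rt17 = smult e rt17"
    and a: "cyclo_aut 17 (p mod 17) rt_plus = a" and b: "cyclo_aut 17 (p mod 17) rt_minus = b"
    and cross: "poly_cong (int p) Phi17 (smult 2 (a * rt_minus + b * rt_plus)) (smult (- 2 * c * e) rt17)"
  shows "[4 * Legendre 2 (int p) * (\<Sum>k=0..p div 4. int ((4 * k) choose (2 * k)) * 272 ^ (p div 4 - k))
          = c * 272 ^ (p div 4)] (mod int p)"
proof -
  have frob: "poly_cong (int p) Phi17 (A ^ p) (cyclo_aut 17 (p mod 17) A)" for A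
    using assms(1) Phi17_dvd_monom_17 by (rule frobenius_cong)
  have legendre_17: "[17 ^ ((p - 1) div 2) = e] (mod int p)"
    using frob[of rt17] unfolding e by (rule frobenius_rt17_cong[OF assms(1-3)])
  have "poly_cong (int p) Phi17 (smult 2 (rt_plus ^ p * rt_minus + rt_minus ^ p * rt_plus))
      (smult 2 (a * rt_minus + b * rt_plus))"
    using frob[of rt_plus] frob[of rt_minus] unfolding a b
    by (intro poly_cong_smult poly_cong_add poly_cong_mult_right)
  also note cross
  finally have "[2 ^ ((p - 1) div 2) * (- 2 * c * e) = - 8 * even_binomial_sum ((p - 1) div 2)] (mod int p)"
    by (rule frobenius_cross_term_cong[OF assms(1-3)])
  with legendre_17 show ?thesis
    by (rule legendre_binomial_sum_cong[OF assms(1-3) _ _ refl])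
qed

theorem corollary2p8:
  fixes p :: nat
  assumes "prime p" and "odd p" and "p \<noteq> 17"
  defines "S \<equiv> 4 * Legendre 2 (int p) *
                 (\<Sum>k=0..p div 4. int ((4*k) choose (2*k)) * 272 ^ (p div 4 - k))"
  shows "(p mod 17 \<in> {1, 16, 4, 13} \<longrightarrow> [S = 4 * 272 ^ (p div 4)] (mod int p)) \<and>
         (p mod 17 \<in> {2, 15, 8, 9} \<longrightarrow> [S = - 4 * 272 ^ (p div 4)] (mod int p)) \<and>
         (p mod 17 \<in> {6, 11, 7, 10} \<longrightarrow> [S = 272 ^ (p div 4)] (mod int p)) \<and>
         (p mod 17 \<in> {3, 14, 5, 12} \<longrightarrow> [S = - (272 ^ (p div 4))] (mod int p))"
proof (intro conjI impI)
  assume "p mod 17 \<in> {1, 16, 4, 13}"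
  then show "[S = 4 * 272 ^ (p div 4)] (mod int p)"
    using cyclo_aut_coset_1[of "p mod 17"] rt_cross_terms(1) unfolding S_def
    by (intro binomial_sum_cong_of_frobenius[OF assms(1-3), where e = 1]) auto
next
  assume "p mod 17 \<in> {2, 15, 8, 9}"
  then show "[S = - 4 * 272 ^ (p div 4)] (mod int p)"
    using cyclo_aut_coset_9[of "p mod 17"] rt_cross_terms(3) unfolding S_def
    by (intro binomial_sum_cong_of_frobenius[OF assms(1-3), where e = 1]) auto
next
  assume "p mod 17 \<in> {6, 11, 7, 10}"
  then show "[S = 272 ^ (p div 4)] (mod int p)"
    using cyclo_aut_coset_10[of "p mod 17"] rt_cross_terms(4) unfolding S_def
    by (intro binomial_sum_cong_of_frobenius[OF assms(1-3), where e = "-1" and c = 1, simplified]) auto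
next
  assume "p mod 17 \<in> {3, 14, 5, 12}"
  then show "[S = - (272 ^ (p div 4))] (mod int p)"
    using cyclo_aut_coset_3[of "p mod 17"] rt_cross_terms(2) unfolding S_def
    by (intro binomial_sum_cong_of_frobenius[OF assms(1-3), where e = "-1" and c = "-1", simplified]) auto
qed

end
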